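(* Let $C_{t-1}\in\mathbb{R}^{d\times d}$ be symmetric positive semidefinite, $A_t\in\mathbb{R}^{d'\times d}$, and $Q_t\in\mathbb{R}^{d'\times d'}$ symmetric with $Q_t\succeq q_{\min}I$ for some $q_{\min}>0$. Let $P_t=A_tC_{t-1}A_t^\top+Q_t$ and let $P_{t-1}\in\mathbb{R}^{d\times d}$ be symmetric positive definite. Assume $A_t^\top A_t\preceq a_{\max}I$ and $P_{t-1}\preceq p_{\max}I$, and that $\gamma=\frac{a_{\max}p_{\max}}{q_{\min}}<1$. Then, with $M_t=P_t^{-1}$ and $M_{t-1}=P_{t-1}^{-1}$, $$A_t^\top M_tA_t\preceq\gamma M_{t-1}.$$
   Context: $\preceq$ denotes the Loewner order on symmetric matrices. This gives a sufficient condition for the contraction assumption $A_t^\top M_tA_t\preceq\gamma M_{t-1}$ with $\gamma\in[0,1)$ used in the tracking analysis of a recursive Gaussian discrepancy update whose pre-update covariance is propagated as $P_t=A_tC_{t-1}A_t^\top+Q_t$ (covariance inflation $Q_t$). *)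

theory Defs
  imports "HOL-Analysis.Analysis"
begin

definition sym_mat :: "real^'n^'n \<Rightarrow> bool" where
  "sym_mat A \<longleftrightarrow> transpose A = A"

definition psd :: "real^'n^'n \<Rightarrow> bool" where
  "psd A \<longleftrightarrow> sym_mat A \<and> (\<forall>x. 0 \<le> x \<bullet> (A *v x))"

definition pd :: "real^'n^'n \<Rightarrow> bool" where
  "pd A \<longleftrightarrow> sym_mat A \<and> (\<forall>x. x \<noteq> 0 \<longrightarrow> 0 < x \<bullet> (A *v x))"

definition loewner_le :: "real^'n^'n \<Rightarrow> real^'n^'n \<Rightarrow> bool" (infix "\<preceq>\<^sub>L" 50) where
  "A \<preceq>\<^sub>L B \<longleftrightarrow> sym_mat A \<and> sym_mat B \<and> psd (B - A)"

end

theory Submission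
  imports Defs
begin

text \<open>
  Since \<open>A C A\<^sup>T\<close> is positive semidefinite, \<open>q_min I \<preceq> P_t\<close>; inverting this scalar
  bound and conjugating by \<open>A\<close> gives \<open>A\<^sup>T M_t A \<preceq> A\<^sup>T A / q_min \<preceq> (a_max / q_min) I\<close>.
  Inverting \<open>P_(t-1) \<preceq> p_max I\<close> gives \<open>I / p_max \<preceq> M_(t-1)\<close>, i.e.
  \<open>(a_max / q_min) I \<preceq> \<gamma> M_(t-1)\<close>. Each inversion compares quadratic forms after the
  substitution \<open>y = P\<^sup>-\<^sup>1 x\<close>.
\<close>

lemma matrix_inv_right:
  fixes P :: "real^'n^'n"
  assumes "invertible P"
  shows "P ** matrix_inv P = mat 1"
  using assms unfolding invertible_def matrix_inv_def by (metis (mono_tags, lifting) someI_ex)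

lemma matrix_vector_mul_matrix_inv:
  fixes P :: "real^'n^'n"
  assumes "invertible P"
  shows "P *v (matrix_inv P *v x) = x"
  by (simp add: matrix_vector_mul_assoc matrix_inv_right[OF assms])

lemma inner_matrix_vector_transpose:
  fixes A :: "real^'n^'m"
  shows "x \<bullet> (A *v y) = (transpose A *v x) \<bullet> y"
  by (metis dot_lmul_matrix transpose_matrix_vector transpose_transpose)

lemma inner_congruence:
  fixes A :: "real^'n^'m" and X :: "real^'m^'m"
  shows "x \<bullet> ((transpose A ** X ** A) *v x) = (A *v x) \<bullet> (X *v (A *v x))"
  by (simp add: matrix_vector_mul_assoc[symmetric] inner_matrix_vector_transpose
      del: transpose_matrix_vector)

lemma inner_scalar_matrix: "x \<bullet> ((c *\<^sub>R mat 1) *v x) = c * (x \<bullet> (x::real^'n))"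
  by (simp add: scaleR_matrix_vector_assoc[symmetric])

lemma transpose_add: "transpose ((X::real^'n^'m) + Y) = transpose X + transpose Y"
  by (simp add: transpose_def vec_eq_iff)

lemma transpose_diff: "transpose ((X::real^'n^'m) - Y) = transpose X - transpose Y"
  by (simp add: transpose_def vec_eq_iff)

lemma sym_mat_congruence:
  fixes A :: "real^'n^'m"
  assumes "sym_mat X"
  shows "sym_mat (transpose A ** X ** A)"
  using assms unfolding sym_mat_def by (simp add: matrix_transpose_mul matrix_mul_assoc)

lemma sym_mat_scaleR: "sym_mat X \<Longrightarrow> sym_mat (c *\<^sub>R X)"
  unfolding sym_mat_def by (simp add: transpose_scalar)

lemma sym_mat_scalar_matrix: "sym_mat (c *\<^sub>R mat 1)"
  unfolding sym_mat_def by (simp add: transpose_scalar)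

lemma sym_mat_matrix_inv:
  fixes P :: "real^'n^'n"
  assumes "sym_mat P" "invertible P"
  shows "sym_mat (matrix_inv P)"
proof -
  let ?M = "matrix_inv P"
  have "transpose ?M ** P = mat 1"
    using matrix_inv_right[OF assms(2)] assms(1)
    by (metis matrix_transpose_mul sym_mat_def transpose_mat)
  then have "transpose ?M = ?M"
    by (metis matrix_inv_right[OF assms(2)] matrix_mul_assoc matrix_mul_lid matrix_mul_rid)
  then show ?thesis
    unfolding sym_mat_def .
qed

lemma psd_congruence:
  fixes A :: "real^'n^'m"
  assumes "psd C"
  shows "psd (A ** C ** transpose A)"
  using assms sym_mat_congruence[of C "transpose A"] inner_congruence[of _ "transpose A" C]
  unfolding psd_def by simp

lemma pd_imp_psd: "pd P \<Longrightarrow> psd P"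
  unfolding pd_def psd_def by (metis inner_zero_left order.refl order_less_imp_le)

lemma pd_imp_invertible:
  fixes P :: "real^'n^'n"
  assumes "pd P"
  shows "invertible P"
proof -
  have "P *v y = 0 \<Longrightarrow> y = 0" for y
    using assms unfolding pd_def by (metis inner_zero_right less_irrefl)
  then show ?thesis
    unfolding invertible_left_inverse matrix_left_invertible_ker by blast
qed

lemma loewner_le_iff_inner:
  "X \<preceq>\<^sub>L Y \<longleftrightarrow> sym_mat X \<and> sym_mat Y \<and> (\<forall>x. x \<bullet> (X *v x) \<le> x \<bullet> (Y *v x))"
  unfolding loewner_le_def psd_def sym_mat_def
  by (auto simp: transpose_diff matrix_vector_mult_diff_rdistrib inner_diff_right)

lemma loewner_leD: "X \<preceq>\<^sub>L Y \<Longrightarrow> x \<bullet> (X *v x) \<le> x \<bullet> (Y *v x)"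
  unfolding loewner_le_iff_inner by blast

lemma loewner_le_trans [trans]: "X \<preceq>\<^sub>L Y \<Longrightarrow> Y \<preceq>\<^sub>L Z \<Longrightarrow> X \<preceq>\<^sub>L Z"
  unfolding loewner_le_iff_inner by (meson order_trans)

lemma loewner_le_congruence:
  fixes A :: "real^'n^'m"
  assumes "X \<preceq>\<^sub>L Y"
  shows "transpose A ** X ** A \<preceq>\<^sub>L transpose A ** Y ** A"
  using assms unfolding loewner_le_iff_inner by (simp add: sym_mat_congruence inner_congruence)

lemma loewner_le_scaleR:
  assumes "0 \<le> c" "X \<preceq>\<^sub>L Y"
  shows "c *\<^sub>R X \<preceq>\<^sub>L c *\<^sub>R Y"
  using assms unfolding loewner_le_iff_inner
  by (simp add: sym_mat_scaleR scaleR_matrix_vector_assoc[symmetric] mult_left_mono)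

lemma loewner_le_add_psd:
  assumes "X \<preceq>\<^sub>L Y" "psd Z"
  shows "X \<preceq>\<^sub>L Z + Y"
  using assms unfolding loewner_le_iff_inner psd_def sym_mat_def
  by (auto simp: transpose_add matrix_vector_mult_add_rdistrib inner_add_right add_increasing)

lemma psd_loewner_le_scalar_nonneg:
  fixes X :: "real^'n^'n"
  assumes "psd X" "X \<preceq>\<^sub>L c *\<^sub>R mat 1"
  shows "0 \<le> c"
proof -
  let ?e = "axis undefined 1 :: real^'n"
  have "0 \<le> ?e \<bullet> (X *v ?e)"
    using assms(1) unfolding psd_def by blast
  also have "\<dots> \<le> c"
    using loewner_leD[OF assms(2), of ?e] by (simp add: inner_scalar_matrix)
  finally show ?thesis .
qed

lemma pd_loewner_le_scalar_pos:
  fixes X :: "real^'n^'n"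
  assumes "pd X" "X \<preceq>\<^sub>L c *\<^sub>R mat 1"
  shows "0 < c"
proof -
  let ?e = "axis undefined 1 :: real^'n"
  have "?e \<noteq> 0"
    by (metis axis_nth one_neq_zero zero_index)
  then have "0 < ?e \<bullet> (X *v ?e)"
    using assms(1) unfolding pd_def by blast
  also have "\<dots> \<le> c"
    using loewner_leD[OF assms(2), of ?e] by (simp add: inner_scalar_matrix)
  finally show ?thesis .
qed

lemma pd_if_scalar_loewner_le:
  fixes P :: "real^'n^'n"
  assumes "0 < c" "c *\<^sub>R mat 1 \<preceq>\<^sub>L P"
  shows "pd P"
  using assms loewner_leD[OF assms(2)] unfolding pd_def loewner_le_def
  by (metis inner_gt_zero_iff inner_scalar_matrix mult_pos_pos order_less_le_trans)

lemma matrix_inv_loewner_le_scalar: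
  fixes P :: "real^'n^'n"
  assumes "0 < c" and lower: "c *\<^sub>R mat 1 \<preceq>\<^sub>L P"
  shows "matrix_inv P \<preceq>\<^sub>L (1 / c) *\<^sub>R mat 1"
proof -
  have "pd P"
    using assms by (rule pd_if_scalar_loewner_le)
  then have inv: "invertible P" and sym: "sym_mat P"
    by (auto simp: pd_imp_invertible pd_def)
  have "x \<bullet> (matrix_inv P *v x) \<le> (x \<bullet> x) / c" for x
  proof -
    define y where "y = matrix_inv P *v x"
    have "c * (norm y)\<^sup>2 \<le> y \<bullet> (P *v y)"
      using loewner_leD[OF lower, of y] by (simp add: inner_scalar_matrix power2_norm_eq_inner)
    also have "\<dots> = x \<bullet> y"
      by (simp add: y_def matrix_vector_mul_matrix_inv[OF inv] inner_commute)
    also have xy: "\<dots> \<le> norm x * norm y"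
      by (rule norm_cauchy_schwarz)
    finally have "c * norm y \<le> norm x"
      by (cases "y = 0") (auto simp: power2_eq_square)
    then have "norm x * norm y \<le> norm x * (norm x / c)"
      using \<open>0 < c\<close> by (intro mult_left_mono) (auto simp: field_simps)
    with xy show ?thesis
      by (simp add: y_def power2_norm_eq_inner[symmetric] power2_eq_square)
  qed
  then show ?thesis
    unfolding loewner_le_iff_inner
    by (simp add: sym_mat_matrix_inv[OF sym inv] sym_mat_scalar_matrix inner_scalar_matrix)
qed

lemma scalar_loewner_le_matrix_inv:
  fixes P :: "real^'n^'n"
  assumes "pd P" and upper: "P \<preceq>\<^sub>L c *\<^sub>R mat 1"
  shows "(1 / c) *\<^sub>R mat 1 \<preceq>\<^sub>L matrix_inv P"
proof -
  have "0 < c"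
    using assms by (rule pd_loewner_le_scalar_pos)
  have inv: "invertible P" and sym: "sym_mat P" and psd: "psd P"
    using \<open>pd P\<close> by (auto simp: pd_imp_invertible pd_imp_psd pd_def)
  have "(x \<bullet> x) / c \<le> x \<bullet> (matrix_inv P *v x)" for x
  proof -
    define y where "y = matrix_inv P *v x"
    define w where "w = (1 / c) *\<^sub>R x"
    have Py: "P *v y = x"
      unfolding y_def by (rule matrix_vector_mul_matrix_inv[OF inv])
    have "y \<bullet> (P *v w) = w \<bullet> x"
      using inner_matrix_vector_transpose[of y P w] sym Py
      by (simp add: sym_mat_def inner_commute del: transpose_matrix_vector)
    then have "(w - y) \<bullet> (P *v (w - y)) = w \<bullet> (P *v w) - 2 * (w \<bullet> x) + x \<bullet> y"
      by (simp add: matrix_vector_mult_diff_distrib inner_diff_left inner_diff_right Py inner_commute)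
    moreover have "0 \<le> (w - y) \<bullet> (P *v (w - y))"
      using psd unfolding psd_def by blast
    moreover have "w \<bullet> (P *v w) \<le> c * (w \<bullet> w)"
      using loewner_leD[OF upper, of w] by (simp add: inner_scalar_matrix)
    moreover have "c * (w \<bullet> w) = (x \<bullet> x) / c" "w \<bullet> x = (x \<bullet> x) / c"
      using \<open>0 < c\<close> by (simp_all add: w_def field_simps)
    ultimately show ?thesis
      by (simp add: y_def)
  qed
  then show ?thesis
    unfolding loewner_le_iff_inner
    by (simp add: sym_mat_matrix_inv[OF sym inv] sym_mat_scalar_matrix inner_scalar_matrix)
qed

theorem proposition6:
  fixes C_prev :: "real^'d^'d" and A :: "real^'d^'e" and Q :: "real^'e^'e"
    and P_prev :: "real^'d^'d" and q_min a_max p_max :: real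
  assumes "psd C_prev"
    and "sym_mat Q" and "q_min > 0" and "q_min *\<^sub>R mat 1 \<preceq>\<^sub>L Q"
    and "pd P_prev"
    and "transpose A ** A \<preceq>\<^sub>L a_max *\<^sub>R mat 1"
    and "P_prev \<preceq>\<^sub>L p_max *\<^sub>R mat 1"
    and "a_max * p_max / q_min < 1"
  shows "transpose A ** matrix_inv (A ** C_prev ** transpose A + Q) ** A
           \<preceq>\<^sub>L (a_max * p_max / q_min) *\<^sub>R matrix_inv P_prev"
proof -
  have "0 < p_max"
    using assms(5,7) by (rule pd_loewner_le_scalar_pos)
  have "psd (transpose A ** mat 1 ** transpose (transpose A))"
    by (rule psd_congruence) (simp add: psd_def sym_mat_def)
  then have "0 \<le> a_max"
    using assms(6) by (intro psd_loewner_le_scalar_nonneg) simp_all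
  have "q_min *\<^sub>R mat 1 \<preceq>\<^sub>L A ** C_prev ** transpose A + Q"
    using assms(4) psd_congruence[OF assms(1)] by (rule loewner_le_add_psd)
  then have "transpose A ** matrix_inv (A ** C_prev ** transpose A + Q) ** A
      \<preceq>\<^sub>L transpose A ** ((1 / q_min) *\<^sub>R mat 1) ** A"
    using assms(3) by (intro loewner_le_congruence matrix_inv_loewner_le_scalar)
  also have "\<dots> = (1 / q_min) *\<^sub>R (transpose A ** A)"
    by (simp add: matrix_scalar_ac scalar_matrix_assoc)
  also have "\<dots> \<preceq>\<^sub>L (1 / q_min) *\<^sub>R (a_max *\<^sub>R mat 1)"
    using assms(3,6) by (intro loewner_le_scaleR) auto
  also have "\<dots> = (a_max * p_max / q_min) *\<^sub>R ((1 / p_max) *\<^sub>R mat 1)"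
    using \<open>0 < p_max\<close> by simp
  also have "\<dots> \<preceq>\<^sub>L (a_max * p_max / q_min) *\<^sub>R matrix_inv P_prev"
    using \<open>0 < p_max\<close> \<open>0 \<le> a_max\<close> assms(3,5,7)
    by (intro loewner_le_scaleR scalar_loewner_le_matrix_inv) auto
  finally show ?thesis .
qed

end
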